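(* Let $q\ge 2$ be a prime power and $M,D\in\mathbb{N}$ with $D\ge 10$ and $M\le D^2$. Then \[ N_H(M,D)\le\frac{q(D-1)}{q\left(1-\sqrt{\frac{\ln D}{D}}\right)-1}. \]
   Context: $N_H(M,D)$ is the smallest length $r$ such that there exist $M$ vectors $\boldsymbol{p}_1,\ldots,\boldsymbol{p}_M\in\mathbb{F}_q^r$ with pairwise Hamming distance $d_H(\boldsymbol{p}_i,\boldsymbol{p}_j)\ge D$ for all $i\ne j$. *)

theory Defs
  imports Complex_Main "HOL-Library.Cardinality"
begin

definition hamming_dist :: "'a list \<Rightarrow> 'a list \<Rightarrow> nat" where
  "hamming_dist xs ys = card {i. i < length xs \<and> xs ! i \<noteq> ys ! i}"

definition N_H :: "'a itself \<Rightarrow> nat \<Rightarrow> nat \<Rightarrow> nat" where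
  "N_H _ M D = (LEAST r. \<exists>p :: nat \<Rightarrow> 'a list.
      (\<forall>i<M. length (p i) = r) \<and>
      (\<forall>i<M. \<forall>j<M. i \<noteq> j \<longrightarrow> D \<le> hamming_dist (p i) (p j)))"

end

theory Submission
  imports Defs "HOL-Probability.Hoeffding"
begin

text \<open>
  Greedily chosen words of length r keep pairwise distance at least D as long as the Hamming
  balls of radius D - 1 around the words chosen so far do not cover all q^r words
  (Gilbert--Varshamov). A ball contains q^r P(Bin(r, 1 - 1/q) < D) words, which Hoeffding's
  inequality bounds by q^r exp(-2 t^2 / r) with t = r (1 - 1/q) - (D - 1). For r the integer
  part of the claimed bound one has t^2 \<ge> r ln D, so a ball has at most q^r / D^2 words and
  fewer than D^2 balls cannot cover everything.
\<close>

lemma hamming_dist_Cons: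
  "hamming_dist (x # xs) (y # ys) = (if x = y then 0 else 1) + hamming_dist xs ys"
proof -
  have split: "{i. i < length (x # xs) \<and> (x # xs) ! i \<noteq> (y # ys) ! i} =
      (if x = y then {} else {0}) \<union> Suc ` {i. i < length xs \<and> xs ! i \<noteq> ys ! i}"
    by (auto simp: image_iff less_Suc_eq_0_disj)
  have "finite {i. i < length xs \<and> xs ! i \<noteq> ys ! i}" by simp
  then show ?thesis
    unfolding hamming_dist_def split by (subst card_Un_disjoint) (auto simp: card_image)
qed

lemma hamming_dist_commute:
  "length xs = length ys \<Longrightarrow> hamming_dist xs ys = hamming_dist ys xs"
  unfolding hamming_dist_def by metis

definition hamming_ball :: "'a list \<Rightarrow> nat \<Rightarrow> 'a list set" where
  "hamming_ball xs d = {ys. length ys = length xs \<and> hamming_dist xs ys < d}"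

definition hamming_ball_volume :: "nat \<Rightarrow> nat \<Rightarrow> nat \<Rightarrow> nat" where
  "hamming_ball_volume q n d = (\<Sum>k<d. (n choose k) * (q - 1) ^ k)"

lemma hamming_ball_volume_Suc_Suc:
  "hamming_ball_volume q (Suc n) (Suc d) =
     hamming_ball_volume q n (Suc d) + (q - 1) * hamming_ball_volume q n d"
proof (induction d)
  case 0
  then show ?case by (simp add: hamming_ball_volume_def)
next
  case (Suc d)
  let ?V = "hamming_ball_volume q"
  define c where "c = q - 1"
  have V: "?V m k = (\<Sum>i<k. (m choose i) * c ^ i)" for m k
    by (simp add: hamming_ball_volume_def c_def)
  have "?V (Suc n) (Suc (Suc d)) = ?V (Suc n) (Suc d) + (Suc n choose Suc d) * c ^ Suc d"
    by (simp add: V)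
  also have "\<dots> = (?V n (Suc d) + (n choose Suc d) * c ^ Suc d) + c * (?V n d + (n choose d) * c ^ d)"
    using Suc.IH unfolding c_def[symmetric] by (simp add: algebra_simps)
  also have "\<dots> = ?V n (Suc (Suc d)) + c * ?V n (Suc d)"
    by (simp add: V)
  finally show ?case by (simp add: c_def)
qed

lemma finite_hamming_ball: "finite (hamming_ball (xs :: 'a::finite list) d)"
proof (rule finite_subset)
  show "hamming_ball xs d \<subseteq> {ys. set ys \<subseteq> UNIV \<and> length ys = length xs}"
    by (auto simp: hamming_ball_def)
qed (rule finite_lists_length_eq, simp)

lemma hamming_ball_Cons:
  "hamming_ball (x # xs) (Suc d) =
     (\<lambda>(y, ys). y # ys) ` (SIGMA y:UNIV. hamming_ball xs (if y = x then Suc d else d))"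
proof (rule set_eqI)
  fix zs
  show "zs \<in> hamming_ball (x # xs) (Suc d) \<longleftrightarrow>
      zs \<in> (\<lambda>(y, ys). y # ys) ` (SIGMA y:UNIV. hamming_ball xs (if y = x then Suc d else d))"
    by (cases zs) (auto simp: hamming_ball_def hamming_dist_Cons image_iff)
qed

lemma card_hamming_ball:
  "card (hamming_ball (xs :: 'a::finite list) d) = hamming_ball_volume CARD('a) (length xs) d"
proof (induction xs arbitrary: d)
  case Nil
  then show ?case
    by (cases d)
      (auto simp: hamming_ball_def hamming_dist_def hamming_ball_volume_def sum.lessThan_Suc_shift
        simp del: sum.lessThan_Suc)
next
  case (Cons x xs)
  show ?case
  proof (cases d)
    case 0
    then show ?thesis by (simp add: hamming_ball_def hamming_ball_volume_def)
  next
    case (Suc e)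
    let ?V = "hamming_ball_volume CARD('a) (length xs)"
    have "card (hamming_ball (x # xs) d) =
        (\<Sum>y\<in>UNIV. card (hamming_ball xs (if y = x then Suc e else e)))"
      unfolding Suc hamming_ball_Cons
      by (subst card_image) (auto simp: inj_on_def finite_hamming_ball)
    also have "\<dots> = ?V (Suc e) + (\<Sum>y\<in>UNIV - {x}. ?V e)"
      by (subst sum.remove[of UNIV x]) (auto simp: Cons.IH intro!: sum.cong)
    also have "\<dots> = ?V (Suc e) + (CARD('a) - 1) * ?V e"
      by (simp add: card_Diff_singleton)
    finally show ?thesis
      by (simp add: Suc hamming_ball_volume_Suc_Suc)
  qed
qed

lemma exists_word_outside_hamming_balls:
  fixes p :: "nat \<Rightarrow> 'a::finite list"
  assumes len: "\<forall>i<m. length (p i) = n"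
    and small: "m * hamming_ball_volume CARD('a) n d < CARD('a) ^ n"
  shows "\<exists>z. length z = n \<and> (\<forall>i<m. d \<le> hamming_dist (p i) z)"
proof -
  let ?W = "{z :: 'a list. set z \<subseteq> UNIV \<and> length z = n}"
  have "card (\<Union>i<m. hamming_ball (p i) d) \<le> (\<Sum>i<m. card (hamming_ball (p i) d))"
    by (rule card_UN_le) simp
  also have "\<dots> = m * hamming_ball_volume CARD('a) n d"
    using len by (simp add: card_hamming_ball)
  also have "\<dots> < card ?W"
    using small card_lists_length_eq[of "UNIV :: 'a set" n] by simp
  finally have "card (\<Union>i<m. hamming_ball (p i) d) < card ?W" .
  moreover have "finite (\<Union>i<m. hamming_ball (p i) d)" by (simp add: finite_hamming_ball)
  ultimately obtain z where z: "z \<in> ?W" "z \<notin> (\<Union>i<m. hamming_ball (p i) d)"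
    by (meson card_mono not_le subsetI)
  then show ?thesis using len by (auto simp: hamming_ball_def not_less intro!: exI[of _ z])
qed

lemma N_H_le_if_hamming_balls_small:
  assumes "(M - 1) * hamming_ball_volume CARD('a::finite) n d < CARD('a) ^ n"
  shows "N_H TYPE('a) M d \<le> n"
proof -
  have "\<exists>p :: nat \<Rightarrow> 'a list. (\<forall>i<m. length (p i) = n) \<and>
      (\<forall>i<m. \<forall>j<m. i \<noteq> j \<longrightarrow> d \<le> hamming_dist (p i) (p j))" if "m \<le> M" for m
    using that
  proof (induction m)
    case 0
    then show ?case by simp
  next
    case (Suc m)
    then obtain p :: "nat \<Rightarrow> 'a list" where len: "\<forall>i<m. length (p i) = n"
      and far: "\<forall>i<m. \<forall>j<m. i \<noteq> j \<longrightarrow> d \<le> hamming_dist (p i) (p j)" by auto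
    have "m * hamming_ball_volume CARD('a) n d \<le> (M - 1) * hamming_ball_volume CARD('a) n d"
      using Suc.prems by (intro mult_right_mono) auto
    then have "m * hamming_ball_volume CARD('a) n d < CARD('a) ^ n" using assms by linarith
    then obtain z where z: "length z = n" "\<forall>i<m. d \<le> hamming_dist (p i) z"
      using exists_word_outside_hamming_balls[OF len] by blast
    have "d \<le> hamming_dist z (p i)" if "i < m" for i
      using z len that hamming_dist_commute[of z "p i"] by simp
    then show ?case
      using len far z by (intro exI[of _ "p(m := z)"]) (auto simp: less_Suc_eq)
  qed
  then show ?thesis unfolding N_H_def by (blast intro: Least_le)
qed

lemma hamming_ball_volume_le_exp:
  fixes q n d :: nat
  defines "t \<equiv> n * (1 - 1 / q) - (real d - 1)"
  assumes "0 < q" and "0 < n" and "0 \<le> t"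
  shows "real (hamming_ball_volume q n d) \<le> q ^ n * exp (-2 * t\<^sup>2 / n)"
proof -
  define p where "p = 1 - 1 / real q"
  have p: "p \<in> {0..1}" using \<open>0 < q\<close> by (auto simp: p_def)
  interpret binomial_distribution n p by unfold_locales (rule p)
  \<comment> \<open>A uniformly random word differs from a fixed one in Bin(n, p) positions.\<close>
  have weight: "q ^ n * ((n choose k) * p ^ k * (1 - p) ^ (n - k)) = (n choose k) * real (q - 1) ^ k"
    for k
  proof (cases "k \<le> n")
    case True
    have "real q * p = real (q - 1)" and "real q * (1 - p) = 1"
      using \<open>0 < q\<close> by (simp_all add: p_def field_simps)
    moreover have "real q ^ n = real q ^ k * real q ^ (n - k)"
      using True by (simp flip: power_add)
    ultimately show ?thesis by (simp add: power_mult_distrib[symmetric] mult_ac)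
  qed simp
  have "real (hamming_ball_volume q n d) = (\<Sum>k<d. (n choose k) * real (q - 1) ^ k)"
    by (simp add: hamming_ball_volume_def)
  also have "\<dots> = q ^ n * (\<Sum>k<d. (n choose k) * p ^ k * (1 - p) ^ (n - k))"
    unfolding sum_distrib_left by (intro sum.cong refl) (rule weight[symmetric])
  also have "\<dots> = q ^ n * measure_pmf.prob (binomial_pmf n p) {x. x \<le> n * p - t}"
  proof -
    have "{x. real x \<le> n * p - t} = {..<d}" by (auto simp: t_def p_def)
    then show ?thesis using p by (simp add: measure_measure_pmf_finite)
  qed
  also have "\<dots> \<le> q ^ n * exp (-2 * t\<^sup>2 / n)"
    using \<open>0 < n\<close> \<open>0 \<le> t\<close> by (intro mult_left_mono prob_le) auto
  finally show ?thesis .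
qed

lemma hamming_ball_volume_mul_sq_le:
  fixes q n d :: nat
  defines "t \<equiv> n * (1 - 1 / q) - (real d - 1)"
  assumes "0 < q" and "0 < n" and "0 < d" and "0 \<le> t" and "n * ln d \<le> t\<^sup>2"
  shows "hamming_ball_volume q n d * d\<^sup>2 \<le> q ^ n"
proof -
  have "ln d \<le> t\<^sup>2 / n" using assms by (simp add: pos_le_divide_eq mult.commute)
  then have "exp (-2 * t\<^sup>2 / n) \<le> exp (- ln (d\<^sup>2))" using \<open>0 < d\<close> by (simp add: ln_realpow)
  also have "\<dots> = 1 / d\<^sup>2" using \<open>0 < d\<close> by (simp add: exp_minus inverse_eq_divide)
  finally have exp_le: "exp (-2 * t\<^sup>2 / n) \<le> 1 / d\<^sup>2" .
  have "real (hamming_ball_volume q n d) \<le> q ^ n * exp (-2 * t\<^sup>2 / n)"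
    using hamming_ball_volume_le_exp[of q n d] assms(2,3,5) unfolding t_def by blast
  also have "\<dots> \<le> q ^ n * (1 / d\<^sup>2)" using exp_le by (intro mult_left_mono) auto
  finally have "real (hamming_ball_volume q n d) \<le> q ^ n / d\<^sup>2" by simp
  then have "real (hamming_ball_volume q n d * d\<^sup>2) \<le> real (q ^ n)"
    using \<open>0 < d\<close> by (simp add: pos_le_divide_eq)
  then show ?thesis by (simp only: of_nat_le_iff)
qed

lemma ln_ge_2_of_ge_10:
  fixes x :: real
  assumes "10 \<le> x"
  shows "2 \<le> ln x"
proof -
  have "exp 2 = exp (1::real) ^ 2" by (simp flip: exp_of_nat_mult)
  also have "\<dots> < (272/100) ^ 2" by (intro power_strict_mono e_less_272) auto
  also have "\<dots> < x" using assms by (simp add: power2_eq_square)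
  finally show ?thesis using ln_ge_iff[of x 2] assms by simp
qed

lemma ln_less_quarter_of_ge_10:
  fixes x :: real
  assumes "10 \<le> x"
  shows "ln x < x / 4"
proof -
  have "(27/10) ^ 5 \<le> exp (1::real) ^ 5"
    using e_approx_32 by (intro power_mono) (auto simp: abs_if split: if_split_asm)
  also have "\<dots> = exp (5/2) ^ 2" by (simp flip: exp_of_nat_mult)
  finally have "10 ^ 2 < exp (5/2 :: real) ^ 2" by (simp add: power_divide)
  then have "10 < exp (5/2 :: real)" by (rule power_less_imp_less_base) simp
  then have "ln 10 < (5/2 :: real)" by (metis exp_less_cancel_iff exp_ln zero_less_numeral)
  moreover have "ln x = ln 10 + ln (x / 10)" using assms by (simp add: ln_div)
  moreover have "ln (x / 10) \<le> x / 10 - 1" using assms by (intro ln_le_minus_one) auto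
  ultimately show ?thesis using assms by linarith
qed

lemma sqrt_ln_div_bounds:
  fixes x :: real
  assumes "10 \<le> x"
  shows "0 < sqrt (ln x / x)" and "sqrt (ln x / x) < 1/2" and "2 \<le> x * (sqrt (ln x / x))\<^sup>2"
proof -
  have ln: "2 \<le> ln x" "ln x < x / 4"
    using ln_ge_2_of_ge_10[OF assms] ln_less_quarter_of_ge_10[OF assms] by auto
  then show "0 < sqrt (ln x / x)" using assms by simp
  have "sqrt (ln x / x) < sqrt (1/4)" using ln assms by (simp add: divide_less_eq)
  then show "sqrt (ln x / x) < 1/2" by (simp add: real_sqrt_divide)
  show "2 \<le> x * (sqrt (ln x / x))\<^sup>2" using ln assms by simp
qed

text \<open>
  With a = 1 - 1/q, s = sqrt (ln D / D) and B the claimed bound, r = \<lfloor>B\<rfloor> gives the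
  margin t = r a - (D - 1) that Hoeffding's inequality needs: t^2 \<ge> r ln D.
\<close>
lemma floor_bound_margin:
  fixes a s D B r :: real
  assumes s: "0 < s" "s < a" and a: "a \<le> 1" and Ds: "2 \<le> D * s\<^sup>2"
    and B: "B * (a - s) = D - 1" and r: "B - 1 < r" "r \<le> B"
  shows "0 < r" and "0 \<le> r * a - (D - 1)" and "r * (D * s\<^sup>2) \<le> (r * a - (D - 1))\<^sup>2"
proof -
  have "s < 1" using s a by linarith
  then have "s\<^sup>2 < 1" using s by (simp add: power_less_one_iff)
  have "1 \<le> D"
  proof (rule ccontr)
    assume "\<not> 1 \<le> D"
    then have "D * s\<^sup>2 \<le> 1 * s\<^sup>2" by (intro mult_right_mono) auto
    then show False using Ds \<open>s\<^sup>2 < 1\<close> by linarith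
  qed
  have "B = (D - 1) / (a - s)" using B s by (simp add: field_simps)
  then have "0 \<le> B" using \<open>1 \<le> D\<close> s by simp
  have "B * (1 - s) = B * (a - s) + B * (1 - a)" by (simp add: algebra_simps)
  moreover have "0 \<le> B * (1 - a)" using \<open>0 \<le> B\<close> a by simp
  ultimately have "D - 1 \<le> B * (1 - s)" using B by linarith
  moreover have "(1 - s) * (B - D) = B * (1 - s) - D + D * s" by (simp add: algebra_simps)
  ultimately have "D * s - 1 \<le> (1 - s) * (B - D)" by linarith
  have "(1 - s) * 2 \<le> s * (D * s - 1)" using Ds s by (simp add: power2_eq_square algebra_simps)
  also have "\<dots> \<le> s * ((1 - s) * (B - D))"
    using \<open>D * s - 1 \<le> (1 - s) * (B - D)\<close> s by (intro mult_left_mono) auto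
  also have "\<dots> = (1 - s) * (s * (B - D))" by (simp only: mult_ac)
  finally have BD: "2 \<le> s * (B - D)" by (rule mult_left_le_imp_le) (use \<open>s < 1\<close> in simp)
  moreover have "s * (B - D) = B * s - D * s" by (simp add: algebra_simps)
  moreover have "0 \<le> D * s" using \<open>1 \<le> D\<close> s by simp
  ultimately have Bs: "2 \<le> B * s" by linarith
  have "(B - r) * a \<le> 1" using r a s by (intro mult_le_one) auto
  moreover have "r * a - (D - 1) = B * s - (B - r) * a" using B by (simp add: algebra_simps)
  ultimately have t: "B * s - 1 \<le> r * a - (D - 1)" by linarith
  have "B * s \<le> B" using \<open>0 \<le> B\<close> \<open>s < 1\<close> by (simp add: mult_left_le)
  then show "0 < r" using Bs r by linarith
  show "0 \<le> r * a - (D - 1)" using t Bs by linarith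
  have "(B * s - 1)\<^sup>2 - B * (D * s\<^sup>2) = B * s * (s * (B - D) - 2) + 1"
    by (simp add: power2_eq_square algebra_simps)
  moreover have "0 \<le> B * s * (s * (B - D) - 2)" using BD Bs by simp
  ultimately have "B * (D * s\<^sup>2) \<le> (B * s - 1)\<^sup>2" by linarith
  moreover have "r * (D * s\<^sup>2) \<le> B * (D * s\<^sup>2)" using r Ds by (intro mult_right_mono) auto
  moreover have "(B * s - 1)\<^sup>2 \<le> (r * a - (D - 1))\<^sup>2" using t Bs by (intro power_mono) auto
  ultimately show "r * (D * s\<^sup>2) \<le> (r * a - (D - 1))\<^sup>2" by linarith
qed

lemma card_field_ge_2: "2 \<le> CARD('a::{finite,field})"
  using card_mono[of UNIV "{0, 1 :: 'a}"] by simp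

theorem lemma4p8:
  fixes M D :: nat
  assumes "D \<ge> 10" and "M \<le> D ^ 2"
  shows "real (N_H TYPE('a::{finite,field}) M D)
           \<le> real (CARD('a)) * (real D - 1)
             / (real (CARD('a)) * (1 - sqrt (ln (real D) / real D)) - 1)"
proof -
  let ?q = "CARD('a)"
  define s where "s = sqrt (ln D / D)"
  define a where "a = 1 - 1 / ?q"
  define B where "B = ?q * (real D - 1) / (?q * (1 - s) - 1)"
  have D: "10 \<le> real D" using assms(1) by simp
  have s: "0 < s" "s < 1/2" "2 \<le> D * s\<^sup>2" "D * s\<^sup>2 = ln D"
    using sqrt_ln_div_bounds[OF D] by (simp_all add: s_def)
  have q: "2 \<le> ?q" by (rule card_field_ge_2)
  then have a: "1/2 \<le> a" "a \<le> 1" by (simp_all add: a_def field_simps)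
  have "?q * (1 - s) - 1 = ?q * (a - s)" using q by (simp add: a_def algebra_simps)
  then have B: "B * (a - s) = real D - 1" using q s a by (simp add: B_def)
  have "s < a" using s(2) a(1) by linarith
  then have "B = (real D - 1) / (a - s)" using B by (simp add: eq_divide_eq)
  then have "0 \<le> B" using D \<open>s < a\<close> by simp
  define r where "r = nat \<lfloor>B\<rfloor>"
  have r: "B - 1 < r" "r \<le> B" using \<open>0 \<le> B\<close> by (simp_all add: r_def)
  note margin = floor_bound_margin[OF s(1) \<open>s < a\<close> a(2) s(3) B r, unfolded s(4) a_def]
  let ?V = "hamming_ball_volume ?q r D"
  have "M - 1 < D\<^sup>2" using assms by (cases M) auto
  moreover have "0 < ?V"
    unfolding hamming_ball_volume_def by (rule sum_pos2[of _ 0]) (use D in auto)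
  ultimately have "(M - 1) * ?V < D\<^sup>2 * ?V" by simp
  also have "\<dots> \<le> ?q ^ r"
    using margin q D by (subst mult.commute, intro hamming_ball_volume_mul_sq_le) simp_all
  finally have "(M - 1) * ?V < ?q ^ r" .
  then have "N_H TYPE('a) M D \<le> r" by (rule N_H_le_if_hamming_balls_small)
  then show ?thesis using r by (simp add: B_def s_def)
qed

end
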